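(* Let $H$ be a connected, simply connected real Lie group whose Lie algebra $\mathfrak h=(V,[\cdot,\cdot]_{\mathfrak h})$ is nilpotent of class at most $2$. Then the Lie algebra morphism $\psi: \mathfrak{aff}(\mathfrak h)\to\mathfrak{aff}(V)$, $\psi(x,D) = (x, D+\tfrac12\mathrm{ad}^{\mathfrak h}_x)$, is an algebraic morphism of algebraic Lie algebras.
   Context: A simply connected nilpotent Lie group $H$ has a unique structure of unipotent real linear algebraic group, $\mathrm{Aut}(H)\cong\mathrm{Aut}(\mathfrak h)$ is a linear algebraic group, and hence $\mathrm{Aff}(H)=H\rtimes\mathrm{Aut}(H)$ (and likewise $\mathrm{Aff}(V)=V\rtimes \mathrm{GL}(V)$ for $V$ abelian) is a real linear algebraic group; $\mathfrak{aff}(\mathfrak h)=\mathfrak h\rtimes\mathrm{Der}(\mathfrak h)$ and $\mathfrak{aff}(V)=V\rtimes\mathfrak{gl}(V)$ are their Lie algebras. An algebraic Lie algebra is the Lie algebra of a real linear algebraic group, and a morphism of algebraic Lie algebras is called algebraic if it is the differential of an algebraic morphism (a group morphism given by polynomial coordinate functions) of the corresponding linear algebraic groups. *)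

theory Defs
  imports "HOL-Analysis.Analysis"
begin

definition nil2_lie_bracket :: "(real^'n \<Rightarrow> real^'n \<Rightarrow> real^'n) \<Rightarrow> bool" where
  "nil2_lie_bracket br \<longleftrightarrow>
     bilinear br \<and>
     (\<forall>x. br x x = 0) \<and>
     (\<forall>x y z. br x (br y z) + br y (br z x) + br z (br x y) = 0) \<and>
     (\<forall>x y z. br (br x y) z = 0)"

text \<open>The simply connected Lie group H with Lie algebra h, realised on V in exponential
  coordinates; for class <= 2 the BCH formula gives x * y = x + y + 1/2 [x,y].\<close>
definition H_mult :: "(real^'n \<Rightarrow> real^'n \<Rightarrow> real^'n) \<Rightarrow> real^'n \<Rightarrow> real^'n \<Rightarrow> real^'n" where
  "H_mult br x y = x + y + (1/2) *\<^sub>R br x y"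

text \<open>Aut(h) = Aut(H) and Der(h), as matrices.\<close>
definition Aut_lie :: "(real^'n \<Rightarrow> real^'n \<Rightarrow> real^'n) \<Rightarrow> (real^'n^'n) set" where
  "Aut_lie br = {A. invertible A \<and> (\<forall>x y. A *v br x y = br (A *v x) (A *v y))}"

definition Der_lie :: "(real^'n \<Rightarrow> real^'n \<Rightarrow> real^'n) \<Rightarrow> (real^'n^'n) set" where
  "Der_lie br = {D. \<forall>x y. D *v br x y = br (D *v x) y + br x (D *v y)}"

definition ad_lie :: "(real^'n \<Rightarrow> real^'n \<Rightarrow> real^'n) \<Rightarrow> real^'n \<Rightarrow> real^'n^'n" where
  "ad_lie br x = matrix (br x)"

text \<open>Aff(H) = H \<rtimes> Aut(H) and Aff(V) = V \<rtimes> GL(V), as subsets of V \<times> End(V),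
  with their group laws.\<close>
definition Aff_H :: "(real^'n \<Rightarrow> real^'n \<Rightarrow> real^'n) \<Rightarrow> ((real^'n) \<times> (real^'n^'n)) set" where
  "Aff_H br = UNIV \<times> Aut_lie br"

definition Aff_H_mult :: "(real^'n \<Rightarrow> real^'n \<Rightarrow> real^'n) \<Rightarrow>
    (real^'n) \<times> (real^'n^'n) \<Rightarrow> (real^'n) \<times> (real^'n^'n) \<Rightarrow> (real^'n) \<times> (real^'n^'n)" where
  "Aff_H_mult br g h = (H_mult br (fst g) (snd g *v fst h), snd g ** snd h)"

definition Aff_V :: "((real^'n) \<times> (real^'n^'n)) set" where
  "Aff_V = UNIV \<times> {A. invertible A}"

definition Aff_V_mult :: "(real^'n) \<times> (real^'n^'n) \<Rightarrow> (real^'n) \<times> (real^'n^'n) \<Rightarrow> (real^'n) \<times> (real^'n^'n)" where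
  "Aff_V_mult g h = (fst g + snd g *v fst h, snd g ** snd h)"

inductive_set poly_fun :: "((real^'n) \<times> (real^'n^'n) \<Rightarrow> real) set" where
  const: "(\<lambda>_. c) \<in> poly_fun"
| coord_vec: "(\<lambda>g. fst g $ i) \<in> poly_fun"
| coord_mat: "(\<lambda>g. snd g $ i $ j) \<in> poly_fun"
| add: "p \<in> poly_fun \<Longrightarrow> q \<in> poly_fun \<Longrightarrow> (\<lambda>g. p g + q g) \<in> poly_fun"
| mult: "p \<in> poly_fun \<Longrightarrow> q \<in> poly_fun \<Longrightarrow> (\<lambda>g. p g * q g) \<in> poly_fun"

definition algebraic_morphism_Aff ::
  "(real^'n \<Rightarrow> real^'n \<Rightarrow> real^'n) \<Rightarrow> ((real^'n) \<times> (real^'n^'n) \<Rightarrow> (real^'n) \<times> (real^'n^'n)) \<Rightarrow> bool" where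
  "algebraic_morphism_Aff br \<Phi> \<longleftrightarrow>
     (\<forall>g \<in> Aff_H br. \<Phi> g \<in> Aff_V) \<and>
     (\<forall>g \<in> Aff_H br. \<forall>h \<in> Aff_H br. \<Phi> (Aff_H_mult br g h) = Aff_V_mult (\<Phi> g) (\<Phi> h)) \<and>
     (\<forall>i. (\<lambda>g. fst (\<Phi> g) $ i) \<in> poly_fun) \<and>
     (\<forall>i j. (\<lambda>g. snd (\<Phi> g) $ i $ j) \<in> poly_fun)"

definition aff_h :: "(real^'n \<Rightarrow> real^'n \<Rightarrow> real^'n) \<Rightarrow> ((real^'n) \<times> (real^'n^'n)) set" where
  "aff_h br = UNIV \<times> Der_lie br"

definition aff_h_bracket :: "(real^'n \<Rightarrow> real^'n \<Rightarrow> real^'n) \<Rightarrow>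
    (real^'n) \<times> (real^'n^'n) \<Rightarrow> (real^'n) \<times> (real^'n^'n) \<Rightarrow> (real^'n) \<times> (real^'n^'n)" where
  "aff_h_bracket br u v = (br (fst u) (fst v) + snd u *v fst v - snd v *v fst u,
                           snd u ** snd v - snd v ** snd u)"

definition aff_V_bracket ::
    "(real^'n) \<times> (real^'n^'n) \<Rightarrow> (real^'n) \<times> (real^'n^'n) \<Rightarrow> (real^'n) \<times> (real^'n^'n)" where
  "aff_V_bracket u v = (snd u *v fst v - snd v *v fst u, snd u ** snd v - snd v ** snd u)"

definition psi :: "(real^'n \<Rightarrow> real^'n \<Rightarrow> real^'n) \<Rightarrow> (real^'n) \<times> (real^'n^'n) \<Rightarrow> (real^'n) \<times> (real^'n^'n)" where
  "psi br u = (fst u, snd u + (1/2) *\<^sub>R ad_lie br (fst u))"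

end

theory Submission
  imports Defs
begin

text \<open>Since \<open>ad\<^sub>x ad\<^sub>y = 0\<close> in class two, \<open>E(x) = 1 + \<onehalf> ad\<^sub>x\<close> is the exponential of
  \<open>\<onehalf> ad\<^sub>x\<close>, it satisfies \<open>E(x) E(y) = E(x + y)\<close>, and the group law of \<open>H\<close> reads
  \<open>x \<cdot> y = x + E(x) y\<close>. Hence \<open>\<Psi>(x, A) = (x, E(x) A)\<close> is a polynomial group morphism
  \<open>Aff(H) \<rightarrow> Aff(V)\<close>: automorphisms intertwine \<open>E(y)\<close> and \<open>E(A y)\<close>. Its differential at the
  identity is \<open>\<psi>\<close>. That \<open>\<psi>\<close> preserves brackets follows from \<open>[D, ad\<^sub>y] = ad\<^sub>D\<^sub>y\<close> for
  derivations \<open>D\<close>.\<close>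

lemma poly_fun_sum:
  assumes "finite S" "\<And>k. k \<in> S \<Longrightarrow> f k \<in> poly_fun"
  shows "(\<lambda>g. \<Sum>k\<in>S. f k g) \<in> poly_fun"
  using assms
proof (induction S rule: finite_induct)
  case empty
  then show ?case using poly_fun.const[of 0] by simp
next
  case (insert a S)
  then show ?case using poly_fun.add[of "f a"] by simp
qed

lemma poly_fun_linear_fst:
  fixes f :: "real^'n \<Rightarrow> real"
  assumes "linear f"
  shows "(\<lambda>g. f (fst g)) \<in> poly_fun"
proof -
  have expansion: "f x = (\<Sum>l\<in>UNIV. f (axis l 1) * x $ l)" for x
  proof -
    have "f x = f (\<Sum>l\<in>UNIV. x $ l *\<^sub>R axis l 1)"
      using basis_expansion[of x] by (simp only: scalar_mult_eq_scaleR)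
    also have "\<dots> = (\<Sum>l\<in>UNIV. f (axis l 1) * x $ l)"
      by (simp only: linear_sum[OF assms] linear_scale[OF assms] real_scaleR_def mult.commute)
    finally show ?thesis .
  qed
  have eq: "(\<lambda>g. f (fst g)) = (\<lambda>g. \<Sum>l\<in>UNIV. f (axis l 1) * fst g $ l)"
    by (rule ext) (rule expansion)
  show ?thesis
    unfolding eq by (intro poly_fun_sum poly_fun.mult poly_fun.const poly_fun.coord_vec) simp
qed

lemma poly_fun_matrix_mult:
  assumes "\<And>i j. (\<lambda>g. M g $ i $ j) \<in> poly_fun" "\<And>i j. (\<lambda>g. N g $ i $ j) \<in> poly_fun"
  shows "(\<lambda>g. (M g ** N g) $ i $ j) \<in> poly_fun"
  unfolding matrix_matrix_mult_def using assms by (simp add: poly_fun_sum poly_fun.mult)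

lemma matrix_add_rdistrib: "((A::'a::semiring_1^'n^'m) + B) ** C = A ** C + B ** C"
  by (vector matrix_matrix_mult_def sum.distrib[symmetric] field_simps)

lemma bilinear_matrix_mult: "bilinear (\<lambda>(A::real^'n^'n) B. A ** B)"
  unfolding bilinear_def
  by (auto intro!: linearI simp: matrix_add_ldistrib matrix_add_rdistrib
      matrix_scalar_ac scalar_matrix_assoc)

definition exp_half_ad :: "(real^'n \<Rightarrow> real^'n \<Rightarrow> real^'n) \<Rightarrow> real^'n \<Rightarrow> real^'n^'n" where
  "exp_half_ad br x = mat 1 + (1/2) *\<^sub>R ad_lie br x"

definition Psi :: "(real^'n \<Rightarrow> real^'n \<Rightarrow> real^'n) \<Rightarrow> (real^'n) \<times> (real^'n^'n) \<Rightarrow> (real^'n) \<times> (real^'n^'n)" where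
  "Psi br g = (fst g, exp_half_ad br (fst g) ** snd g)"

locale nil2_lie_algebra =
  fixes br :: "real^'n \<Rightarrow> real^'n \<Rightarrow> real^'n"
  assumes nil2: "nil2_lie_bracket br"
begin

lemma bilinear: "bilinear br"
  using nil2 unfolding nil2_lie_bracket_def by blast

lemma bracket_self [simp]: "br x x = 0"
  using nil2 unfolding nil2_lie_bracket_def by blast

lemma bracket_left_nested [simp]: "br (br x y) z = 0"
  using nil2 unfolding nil2_lie_bracket_def by blast

lemma linear_bracket_right: "linear (br x)"
  using bilinear unfolding bilinear_def by blast

lemma bracket_antisym: "br y x = - br x y"
proof -
  have "br (x + y) (x + y) = br x x + br x y + br y x + br y y"
    using bilinear by (simp add: bilinear_ladd bilinear_radd del: bracket_self)
  then show ?thesis by (simp add: eq_neg_iff_add_eq_0 add.commute)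
qed

lemma bracket_right_nested [simp]: "br x (br y z) = 0"
  using bracket_antisym[of "br y z" x] by simp

lemma ad_lie_apply [simp]: "ad_lie br x *v v = br x v"
  unfolding ad_lie_def using matrix_vector_mul(2)[OF linear_bracket_right] by metis

lemma ad_lie_mult_ad_lie [simp]: "ad_lie br x ** ad_lie br y = 0"
  by (simp add: matrix_eq flip: matrix_vector_mul_assoc)

lemma ad_lie_bracket [simp]: "ad_lie br (br x y) = 0"
  by (simp add: matrix_eq)

lemma ad_lie_add: "ad_lie br (x + y) = ad_lie br x + ad_lie br y"
  by (simp add: matrix_eq matrix_vector_mult_add_rdistrib bilinear_ladd[OF bilinear])

lemma ad_lie_scaleR: "ad_lie br (c *\<^sub>R x) = c *\<^sub>R ad_lie br x"
  by (simp add: matrix_eq bilinear_lmul[OF bilinear] flip: scaleR_matrix_vector_assoc)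

lemma ad_lie_zero [simp]: "ad_lie br 0 = 0"
  by (simp add: matrix_eq bilinear_lzero[OF bilinear])

lemma linear_ad_lie: "linear (ad_lie br)"
  by (rule linearI) (simp_all add: ad_lie_add ad_lie_scaleR)

lemma Der_lie_commutator_ad_lie:
  assumes "D \<in> Der_lie br"
  shows "D ** ad_lie br y - ad_lie br y ** D = ad_lie br (D *v y)"
  using assms unfolding Der_lie_def
  by (simp add: matrix_eq matrix_vector_mult_diff_rdistrib flip: matrix_vector_mul_assoc)

lemma Aut_lie_ad_lie:
  assumes "A \<in> Aut_lie br"
  shows "A ** ad_lie br y = ad_lie br (A *v y) ** A"
  using assms unfolding Aut_lie_def by (simp add: matrix_eq flip: matrix_vector_mul_assoc)

lemma psi_bracket:
  assumes D: "D \<in> Der_lie br" and E: "E \<in> Der_lie br"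
  shows "psi br (aff_h_bracket br (x, D) (y, E)) = aff_V_bracket (psi br (x, D)) (psi br (y, E))"
proof -
  let ?ad = "ad_lie br"
  have vec: "br x y + D *v y - E *v x
      = (D + (1/2) *\<^sub>R ?ad x) *v y - (E + (1/2) *\<^sub>R ?ad y) *v x"
    using bracket_antisym[of y x]
    by (simp add: matrix_vector_mult_add_rdistrib flip: scaleR_matrix_vector_assoc)
  have "(D + (1/2) *\<^sub>R ?ad x) ** (E + (1/2) *\<^sub>R ?ad y) - (E + (1/2) *\<^sub>R ?ad y) ** (D + (1/2) *\<^sub>R ?ad x)
      = D ** E - E ** D + (1/2) *\<^sub>R ((D ** ?ad y - ?ad y ** D) - (E ** ?ad x - ?ad x ** E))"
    by (simp add: matrix_add_ldistrib matrix_add_rdistrib matrix_scalar_ac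
        flip: scalar_matrix_assoc) (simp add: algebra_simps)
  also have "\<dots> = D ** E - E ** D + (1/2) *\<^sub>R ?ad (br x y + D *v y - E *v x)"
    using Der_lie_commutator_ad_lie[OF D] Der_lie_commutator_ad_lie[OF E]
    by (simp add: ad_lie_add linear_diff[OF linear_ad_lie])
  finally show ?thesis
    unfolding psi_def aff_h_bracket_def aff_V_bracket_def using vec by simp
qed

lemma exp_half_ad_mult: "exp_half_ad br x ** exp_half_ad br y = exp_half_ad br (x + y)"
  unfolding exp_half_ad_def
  by (simp add: matrix_add_ldistrib matrix_add_rdistrib matrix_scalar_ac ad_lie_add
      scaleR_add_right flip: scalar_matrix_assoc)

lemma exp_half_ad_zero [simp]: "exp_half_ad br 0 = mat 1"
  by (simp add: exp_half_ad_def)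

lemma invertible_exp_half_ad: "invertible (exp_half_ad br x)"
  unfolding invertible_def
  by (intro exI[of _ "exp_half_ad br (- x)"]) (simp add: exp_half_ad_mult)

lemma H_mult_eq: "H_mult br x y = x + exp_half_ad br x *v y"
  unfolding H_mult_def exp_half_ad_def
  by (simp add: matrix_vector_mult_add_rdistrib flip: scaleR_matrix_vector_assoc)

lemma Aut_lie_exp_half_ad:
  assumes "A \<in> Aut_lie br"
  shows "exp_half_ad br (A *v y) ** A = A ** exp_half_ad br y"
  unfolding exp_half_ad_def
  by (simp add: matrix_add_ldistrib matrix_add_rdistrib matrix_scalar_ac Aut_lie_ad_lie[OF assms]
      flip: scalar_matrix_assoc)

lemma exp_half_ad_H_mult: "exp_half_ad br (H_mult br x y) = exp_half_ad br (x + y)"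
  unfolding H_mult_def exp_half_ad_def by (simp add: ad_lie_add ad_lie_scaleR)

lemma Psi_mult:
  assumes "A \<in> Aut_lie br"
  shows "Psi br (Aff_H_mult br (x, A) (y, B)) = Aff_V_mult (Psi br (x, A)) (Psi br (y, B))"
proof -
  have "exp_half_ad br (H_mult br x (A *v y)) ** (A ** B)
      = exp_half_ad br x ** (exp_half_ad br (A *v y) ** A) ** B"
    by (simp add: exp_half_ad_H_mult flip: exp_half_ad_mult matrix_mul_assoc)
  also have "\<dots> = (exp_half_ad br x ** A) ** (exp_half_ad br y ** B)"
    by (simp add: Aut_lie_exp_half_ad[OF assms] matrix_mul_assoc)
  finally show ?thesis
    unfolding Psi_def Aff_H_mult_def Aff_V_mult_def
    by (simp add: H_mult_eq matrix_vector_mul_assoc)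
qed

lemma Psi_in_Aff_V: "g \<in> Aff_H br \<Longrightarrow> Psi br g \<in> Aff_V"
  unfolding Aff_H_def Aff_V_def Aut_lie_def Psi_def
  by (auto intro!: invertible_mult invertible_exp_half_ad)

lemma Psi_coordinates_poly:
  "(\<lambda>g. fst (Psi br g) $ i) \<in> poly_fun" "(\<lambda>g. snd (Psi br g) $ i $ j) \<in> poly_fun"
proof -
  have ad: "(\<lambda>g. ad_lie br (fst g) $ k $ l) \<in> poly_fun" for k l
    by (intro poly_fun_linear_fst linearI) (simp_all add: ad_lie_add ad_lie_scaleR)
  have "(\<lambda>g. exp_half_ad br (fst g) $ k $ l) \<in> poly_fun" for k l
    unfolding exp_half_ad_def vector_add_component vector_scaleR_component real_scaleR_def
    by (intro poly_fun.add poly_fun.mult poly_fun.const ad)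
  then show "(\<lambda>g. snd (Psi br g) $ i $ j) \<in> poly_fun"
    unfolding Psi_def by (simp add: poly_fun_matrix_mult poly_fun.coord_mat)
  show "(\<lambda>g. fst (Psi br g) $ i) \<in> poly_fun"
    unfolding Psi_def by (simp add: poly_fun.coord_vec)
qed

lemma has_derivative_Psi: "(Psi br has_derivative psi br) (at (0, mat 1))"
proof -
  have "bounded_linear (ad_lie br)"
    using linear_ad_lie linear_conv_bounded_linear by blast
  then have "((\<lambda>g. ad_lie br (fst g)) has_derivative (\<lambda>h. ad_lie br (fst h))) (at (0, mat 1))"
    using bounded_linear.has_derivative has_derivative_fst[OF has_derivative_ident] by blast
  then have E: "((\<lambda>g. exp_half_ad br (fst g)) has_derivative (\<lambda>h. (1/2) *\<^sub>R ad_lie br (fst h)))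
      (at (0, mat 1))"
    unfolding exp_half_ad_def
    using has_derivative_add[OF has_derivative_const[of "mat 1"] has_derivative_scaleR_right[of _ _ _ "1/2"]]
    by simp
  have "((\<lambda>g. exp_half_ad br (fst g) ** snd g) has_derivative
      (\<lambda>h. exp_half_ad br (fst (0::real^'n, mat 1 :: real^'n^'n)) ** snd h
        + (1/2) *\<^sub>R ad_lie br (fst h) ** snd (0::real^'n, mat 1 :: real^'n^'n))) (at (0, mat 1))"
    by (rule bounded_bilinear.FDERIV[OF bilinear_matrix_mult[unfolded bilinear_conv_bounded_bilinear]
          E has_derivative_snd[OF has_derivative_ident]])
  then have "((\<lambda>g. exp_half_ad br (fst g) ** snd g) has_derivative
      (\<lambda>h. snd h + (1/2) *\<^sub>R ad_lie br (fst h))) (at (0, mat 1))"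
    by (simp add: matrix_scalar_ac flip: scalar_matrix_assoc)
  then show ?thesis
    unfolding Psi_def psi_def
    by (intro has_derivative_Pair has_derivative_fst[OF has_derivative_ident])
qed

end

theorem lemma4:
  fixes br :: "real^'n \<Rightarrow> real^'n \<Rightarrow> real^'n"
  assumes "nil2_lie_bracket br"
  shows "(\<forall>u \<in> aff_h br. \<forall>v \<in> aff_h br.
            psi br (aff_h_bracket br u v) = aff_V_bracket (psi br u) (psi br v)) \<and>
         (\<exists>\<Phi> L. algebraic_morphism_Aff br \<Phi> \<and>
            (\<Phi> has_derivative L) (at (0, mat 1)) \<and>
            (\<forall>u \<in> aff_h br. L u = psi br u))"
proof -
  interpret nil2_lie_algebra br by standard (fact assms)
  have "algebraic_morphism_Aff br (Psi br)"
    unfolding algebraic_morphism_Aff_def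
    using Psi_in_Aff_V Psi_mult Psi_coordinates_poly by (auto simp: Aff_H_def)
  then show ?thesis
    using psi_bracket has_derivative_Psi unfolding aff_h_def by auto
qed

end
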